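(* Let $u\in\mathcal{S}^F(B_1)$, let $\beta=\frac{2}{2-\gamma}$, and let $a_0>0$ be a constant depending only on $d,\Lambda,\gamma$ such that for every domain $\Omega$, every $v\in\mathcal{S}^F(\Omega)$, every $x_0\in\mathbb{R}^d$ and every $a\ge a_0$, one has $L_v(av-|x-x_0|^\beta)\ge0$ in $\{v>0\}\cap\Omega$. Suppose that for some direction $e\in\mathbb{S}^{d-1}$ and constants $\kappa>0$ and $0<\eta\le\frac{1}{2^{\beta+1}a_0}$ we have $$D_eu\ge\kappa\qquad\text{in }B_1\cap\{u\ge\eta\}.$$ Then there is $\varepsilon>0$, depending only on $\kappa$, such that if $D_eu\ge-\varepsilon$ in $B_1$, then $D_eu\ge0$ in $B_{1/2}$.
   Context: Fix $d\ge1$, $\Lambda\ge1$, $\gamma\in(1,2)$. $\mathcal{S}_d$ is the space of real symmetric $d\times d$ matrices. Standing assumptions on $F:\mathcal{S}_d\to\mathbb{R}$: (i) uniform ellipticity: $\frac1\Lambda\|P\|\le F(M+P)-F(M)\le\Lambda\|P\|$ for all $M,P\in\mathcal{S}_d$, $P\ge0$; (ii) $F$ is convex, $F(0)=0$, and the trace map is a sub-differential of $F$ at $0$; (iii) either $F$ is (Gâteaux) differentiable at $0$, or $F(\lambda M)=\lambda F(M)$ for all $\lambda>0$, $M\in\mathcal{S}_d$. A sub-differential of $F$ at $A$ is a linear map $S_A:\mathcal{S}_d\to\mathbb{R}$ with $S_A(M)\le F(A+M)-F(A)$ for all $M$. $\mathcal{S}^F(\Omega)$ is the class of continuous (viscosity,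 hence classical) solutions of $F(D^2u)=u^{\gamma-1}$, $u\ge0$ in $\Omega$. The linearized operator is $L_v(w)=S_{D^2v}(D^2w)-(\gamma-1)v^{\gamma-2}w$ in $\{v>0\}\cap\Omega$, with $S_{D^2v}$ a sub-differential of $F$ at $D^2v(x)$ at each point. Such a constant $a_0$ exists. $B_r$ denotes the ball of radius $r$ centered at the origin; $D_eu$ is the directional derivative in direction $e$. *)

theory Defs
  imports "HOL-Analysis.Analysis"
begin

definition sym_mat :: "real^'n^'n \<Rightarrow> bool" where
  "sym_mat M \<longleftrightarrow> transpose M = M"

definition psd :: "real^'n^'n \<Rightarrow> bool" where
  "psd P \<longleftrightarrow> (\<forall>x. 0 \<le> x \<bullet> (P *v x))"

definition mat_norm :: "real^'n^'n \<Rightarrow> real" where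
  "mat_norm P = onorm (\<lambda>x. P *v x)"

definition unif_elliptic :: "real \<Rightarrow> (real^'n^'n \<Rightarrow> real) \<Rightarrow> bool" where
  "unif_elliptic \<Lambda> F \<longleftrightarrow>
     (\<forall>M P. sym_mat M \<longrightarrow> sym_mat P \<longrightarrow> psd P \<longrightarrow>
        mat_norm P / \<Lambda> \<le> F (M + P) - F M \<and> F (M + P) - F M \<le> \<Lambda> * mat_norm P)"

definition subdiff :: "(real^'n^'n \<Rightarrow> real) \<Rightarrow> real^'n^'n \<Rightarrow> (real^'n^'n \<Rightarrow> real) \<Rightarrow> bool" where
  "subdiff F A S \<longleftrightarrow> linear S \<and> (\<forall>M. sym_mat M \<longrightarrow> S M \<le> F (A + M) - F A)"

definition gateaux_diff_at_0 :: "(real^'n^'n \<Rightarrow> real) \<Rightarrow> bool" where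
  "gateaux_diff_at_0 F \<longleftrightarrow>
     (\<exists>T. linear T \<and> (\<forall>M. sym_mat M \<longrightarrow> ((\<lambda>t. F (t *\<^sub>R M)) has_real_derivative T M) (at 0)))"

definition pos_homogeneous :: "(real^'n^'n \<Rightarrow> real) \<Rightarrow> bool" where
  "pos_homogeneous F \<longleftrightarrow> (\<forall>t M. t > 0 \<longrightarrow> sym_mat M \<longrightarrow> F (t *\<^sub>R M) = t * F M)"

definition standing :: "real \<Rightarrow> real \<Rightarrow> (real^'n^'n \<Rightarrow> real) \<Rightarrow> bool" where
  "standing \<Lambda> \<gamma> F \<longleftrightarrow> 1 \<le> \<Lambda> \<and> 1 < \<gamma> \<and> \<gamma> < 2 \<and>
     unif_elliptic \<Lambda> F \<and> convex_on {M. sym_mat M} F \<and> F 0 = 0 \<and> subdiff F 0 trace \<and>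
     (gateaux_diff_at_0 F \<or> pos_homogeneous F)"

definition hessian_at :: "(real^'n \<Rightarrow> real) \<Rightarrow> real^'n \<Rightarrow> real^'n^'n \<Rightarrow> bool" where
  "hessian_at w x H \<longleftrightarrow>
     (\<exists>g U. open U \<and> x \<in> U \<and> (\<forall>y\<in>U. (w has_derivative (\<lambda>h. g y \<bullet> h)) (at y)) \<and>
            (g has_derivative (\<lambda>h. H *v h)) (at x))"

definition C2_on :: "(real^'n) set \<Rightarrow> (real^'n \<Rightarrow> real) \<Rightarrow> bool" where
  "C2_on \<Omega> u \<longleftrightarrow> (\<exists>D2u. continuous_on \<Omega> D2u \<and> (\<forall>x\<in>\<Omega>. hessian_at u x (D2u x)))"

definition solF :: "(real^'n^'n \<Rightarrow> real) \<Rightarrow> real \<Rightarrow> (real^'n) set \<Rightarrow> (real^'n \<Rightarrow> real) \<Rightarrow> bool" where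
  "solF F \<gamma> \<Omega> u \<longleftrightarrow> continuous_on \<Omega> u \<and> C2_on \<Omega> u \<and>
     (\<forall>x\<in>\<Omega>. 0 \<le> u x \<and> (\<forall>H. hessian_at u x H \<longrightarrow> F H = u x powr (\<gamma> - 1)))"

text \<open>L_v(w) >= 0 in {v>0} \<inter> Omega, for every choice of sub-differential S_{D^2v(x)}.\<close>
definition lin_nonneg :: "(real^'n^'n \<Rightarrow> real) \<Rightarrow> real \<Rightarrow> (real^'n) set \<Rightarrow> (real^'n \<Rightarrow> real) \<Rightarrow> (real^'n \<Rightarrow> real) \<Rightarrow> bool" where
  "lin_nonneg F \<gamma> \<Omega> v w \<longleftrightarrow>
     (\<forall>x\<in>\<Omega>. 0 < v x \<longrightarrow> (\<forall>Hv Hw S. hessian_at v x Hv \<longrightarrow> hessian_at w x Hw \<longrightarrow> subdiff F Hv S \<longrightarrow>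
        0 \<le> S Hw - (\<gamma> - 1) * v x powr (\<gamma> - 2) * w x))"

definition dir_deriv :: "(real^'n \<Rightarrow> real) \<Rightarrow> real^'n \<Rightarrow> real^'n \<Rightarrow> real" where
  "dir_deriv u e x = frechet_derivative u (at x) e"

end

(* Suppose D_e u (y) < 0 for some |y| < 1/2; then u (y) < eta. With eps = kappa / 3 and
   c = eps 2^(beta+2), compare the difference quotient (u (x + h e) - u x) / h, which approximates
   D_e u uniformly for small h, with the barrier c (a0 u - |x - y|^beta). Their difference W is
   negative at y, so it attains a negative minimum on {x in cball y (1/2). u x <= eta}.
   The choice of eps, c and eta makes W >= 0 where u = 0, where u = eta and on the sphere
   |x - y| = 1/2, so the minimum point z is interior and u z > 0. There D^2 W is positive
   semidefinite, so a subgradient S of F at D^2 u (z) satisfies S (D^2 W) >= 0 by ellipticity,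
   while convexity of F, concavity of t powr (gamma - 1) and L_u (a0 u - |x - y|^beta) >= 0 give
   S (D^2 W) <= (gamma - 1) u(z)^(gamma - 2) W z < 0. *)

theory Submission
  imports Defs
begin

section \<open>Symmetric matrices and subgradients\<close>

lemma transpose_add: "transpose (A + B) = transpose A + transpose (B :: real^'n^'m)"
  by (simp add: vec_eq_iff transpose_def)

lemma transpose_diff: "transpose (A - B) = transpose A - transpose (B :: real^'n^'m)"
  by (simp add: vec_eq_iff transpose_def)

lemma sym_mat_add: "sym_mat A \<Longrightarrow> sym_mat B \<Longrightarrow> sym_mat (A + B)"
  by (simp add: sym_mat_def transpose_add)

lemma sym_mat_diff: "sym_mat A \<Longrightarrow> sym_mat B \<Longrightarrow> sym_mat (A - B)"
  by (simp add: sym_mat_def transpose_diff)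

lemma sym_mat_scaleR: "sym_mat A \<Longrightarrow> sym_mat (c *\<^sub>R A)"
  by (simp add: sym_mat_def transpose_scalar)

lemma sym_mat_zero: "sym_mat 0"
  by (simp add: sym_mat_def vec_eq_iff transpose_def)

lemma convex_strict_epigraph:
  assumes "convex_on UNIV f"
  shows "convex {p. f (fst p) < snd p}"
  unfolding convex_def
proof clarsimp
  fix x y and s t u v :: real
  assume "f x < s" "f y < t" "0 \<le> u" "0 \<le> v" "u + v = 1"
  then have "u * f x + v * f y < u * s + v * t"
    by (smt (verit, best) mult_left_mono mult_strict_left_mono)
  moreover have "f (u *\<^sub>R x + v *\<^sub>R y) \<le> u * f x + v * f y"
    using convex_onD[OF assms, of v x y] \<open>0 \<le> u\<close> \<open>0 \<le> v\<close> \<open>u + v = 1\<close>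
    by (simp add: eq_diff_eq[symmetric])
  ultimately show "f (u *\<^sub>R x + v *\<^sub>R y) < u * s + v * t" by linarith
qed

lemma convex_on_UNIV_subgradient:
  fixes f :: "'a::euclidean_space \<Rightarrow> real"
  assumes "convex_on UNIV f"
  obtains S where "linear S" "\<And>x. S x \<le> f (a + x) - f a"
proof -
  \<comment> \<open>Separate the strict epigraph of f from the point (a, f a).\<close>
  define E where "E = {p :: 'a \<times> real. f (fst p) < snd p}"
  have "convex E" unfolding E_def using assms by (rule convex_strict_epigraph)
  moreover have "(0, f 0 + 1) \<in> E" by (simp add: E_def)
  moreover have "E \<inter> {(a, f a)} = {}" by (simp add: E_def)
  ultimately obtain p b where "p \<noteq> 0" "\<forall>x\<in>E. p \<bullet> x \<le> b" "b \<le> p \<bullet> (a, f a)"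
    using separating_hyperplane_sets[OF _ convex_singleton, of E "(a, f a)"] by blast
  then obtain q \<alpha> where "(q, \<alpha>) \<noteq> 0"
    and sep: "\<And>x t. f x < t \<Longrightarrow> q \<bullet> x + \<alpha> * t \<le> q \<bullet> a + \<alpha> * f a"
    by (cases p) (fastforce simp: E_def)
  have "\<alpha> \<le> 0" using sep[of a "f a + 1"] by (simp add: algebra_simps)
  moreover have "\<alpha> \<noteq> 0"
  proof
    assume "\<alpha> = 0"
    then have "q \<bullet> q \<le> 0" using sep[of "a + q" "f (a + q) + 1"] by (simp add: inner_add_right)
    then have "q = 0" by (metis inner_gt_zero_iff not_le)
    then show False using \<open>(q, \<alpha>) \<noteq> 0\<close> \<open>\<alpha> = 0\<close> by (simp add: zero_prod_def)
  qed
  ultimately have "\<alpha> < 0" by simp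
  show ?thesis
  proof
    show "linear (\<lambda>x. q \<bullet> x / - \<alpha>)"
      by (rule linearI) (simp_all add: inner_add_right add_divide_distrib)
    show "q \<bullet> x / - \<alpha> \<le> f (a + x) - f a" for x
    proof -
      have "q \<bullet> x \<le> - \<alpha> * (f (a + x) - f a)"
      proof (rule field_le_epsilon)
        fix e :: real
        assume "0 < e"
        then show "q \<bullet> x \<le> - \<alpha> * (f (a + x) - f a) + e"
          using sep[of "a + x" "f (a + x) + e / - \<alpha>"] \<open>\<alpha> < 0\<close> divide_pos_neg[of e \<alpha>]
          by (simp add: inner_add_right algebra_simps)
      qed
      then show ?thesis using \<open>\<alpha> < 0\<close> by (simp add: field_simps)
    qed
  qed
qed

lemma subdiff_exists:
  fixes F :: "real^'n^'n \<Rightarrow> real"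
  assumes "convex_on {M. sym_mat M} F" and "sym_mat A"
  obtains S where "subdiff F A S"
proof -
  \<comment> \<open>F after the symmetric part is a convex extension of F to all matrices.\<close>
  define sym_part :: "real^'n^'n \<Rightarrow> real^'n^'n" where "sym_part M = (1/2) *\<^sub>R (M + transpose M)" for M
  have sym_part_sym: "sym_mat (sym_part M)" for M
    by (simp add: sym_mat_def sym_part_def transpose_scalar transpose_add add.commute)
  have sym_part_id: "sym_part M = M" if "sym_mat M" for M
    using that by (simp add: sym_part_def sym_mat_def scaleR_2[symmetric] del: scaleR_2)
  have "linear sym_part"
    by (rule linearI) (simp_all add: sym_part_def transpose_add transpose_scalar algebra_simps)
  have "convex_on UNIV (F \<circ> sym_part)"
  proof (rule convex_onI)
    fix t :: real and M N :: "real^'n^'n"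
    assume "0 < t" "t < 1"
    have "sym_part ((1 - t) *\<^sub>R M + t *\<^sub>R N) = (1 - t) *\<^sub>R sym_part M + t *\<^sub>R sym_part N"
      using \<open>linear sym_part\<close> by (simp add: linear_add linear_scale)
    then show "(F \<circ> sym_part) ((1 - t) *\<^sub>R M + t *\<^sub>R N) \<le> (1 - t) * (F \<circ> sym_part) M + t * (F \<circ> sym_part) N"
      using convex_onD[OF assms(1), of t "sym_part M" "sym_part N"] \<open>0 < t\<close> \<open>t < 1\<close> sym_part_sym
      by simp
  qed simp
  then obtain S where "linear S" and S: "\<And>M. S M \<le> F (sym_part (A + M)) - F (sym_part A)"
    by (rule convex_on_UNIV_subgradient[where a = A]) auto
  have "S M \<le> F (A + M) - F A" if "sym_mat M" for M
    using S[of M] sym_part_id[OF assms(2)] sym_part_id[OF sym_mat_add[OF assms(2) that]] by simp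
  with \<open>linear S\<close> show ?thesis
    using that unfolding subdiff_def by blast
qed

lemma subdiff_psd_nonneg:
  fixes F :: "real^'n^'n \<Rightarrow> real"
  assumes "unif_elliptic \<Lambda> F" "\<Lambda> > 0" "subdiff F A S" "sym_mat A" "sym_mat P" "psd P"
  shows "0 \<le> S P"
proof -
  have "S (- P) \<le> F (A - P) - F A"
    using assms(3,5) sym_mat_diff[OF sym_mat_zero, of P] unfolding subdiff_def by fastforce
  then have "F A - F (A - P) \<le> S P"
    using assms(3) by (simp add: subdiff_def linear_neg)
  moreover have "mat_norm P / \<Lambda> \<le> F A - F (A - P)"
    using assms(1,4-6) sym_mat_diff unfolding unif_elliptic_def by (metis diff_add_cancel)
  moreover have "0 \<le> mat_norm P" unfolding mat_norm_def
    by (rule onorm_pos_le) simp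
  ultimately show ?thesis using \<open>\<Lambda> > 0\<close> by (smt (verit) divide_nonneg_pos)
qed

section \<open>The radial function norm (x - y) powr beta\<close>

lemma has_derivative_norm_powr:
  fixes x y :: "'a::real_inner"
  assumes "x \<noteq> y"
  shows "((\<lambda>x. norm (x - y) powr a) has_derivative (\<lambda>h. a * norm (x - y) powr (a - 2) * ((x - y) \<bullet> h))) (at x)"
proof -
  have n: "norm (x - y) > 0" using assms by simp
  have "((\<lambda>x. norm (x - y) powr a) has_derivative
      (\<lambda>h. norm (x - y) powr a * (0 * ln (norm (x - y)) + (sgn (x - y) \<bullet> h) * a / norm (x - y)))) (at x)"
    using has_derivative_compose[OF has_derivative_diff[OF has_derivative_ident has_derivative_const]
        has_derivative_norm[of "x - y"]] assms n
    by (auto intro!: derivative_eq_intros simp: inner_commute)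
  moreover have "norm (x - y) powr a * ((sgn (x - y) \<bullet> h) * a / norm (x - y))
      = a * norm (x - y) powr (a - 2) * ((x - y) \<bullet> h)" for h
  proof -
    have "sgn (x - y) \<bullet> h = ((x - y) \<bullet> h) / norm (x - y)"
      by (simp only: sgn_div_norm inner_scaleR_left) (simp add: divide_inverse mult.commute)
    then show ?thesis using n by (simp add: powr_diff field_simps power2_eq_square)
  qed
  ultimately show ?thesis by simp
qed

lemma has_derivative_zero_of_powr_bound:
  fixes f :: "'a::real_normed_vector \<Rightarrow> 'b::real_normed_vector"
  assumes "\<alpha> > 0" "C > 0" "f y = 0"
    and bound: "\<And>x. norm (f x) \<le> C * norm (x - y) powr (1 + \<alpha>)"
  shows "(f has_derivative (\<lambda>h. 0)) (at y)"
  unfolding has_derivative_at'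
proof (intro conjI allI impI bounded_linear_zero)
  fix e :: real assume "e > 0"
  define d where "d = (e / C) powr (1 / \<alpha>)"
  have "d > 0" using \<open>e > 0\<close> \<open>C > 0\<close> by (simp add: d_def)
  have d_powr: "d powr \<alpha> = e / C" using assms \<open>e > 0\<close> by (simp add: d_def powr_powr)
  show "\<exists>d>0. \<forall>x. 0 < norm (x - y) \<and> norm (x - y) < d \<longrightarrow> norm (f x - f y - 0) / norm (x - y) < e"
  proof (intro exI[of _ d] conjI allI impI \<open>d > 0\<close>)
    fix x assume x: "0 < norm (x - y) \<and> norm (x - y) < d"
    let ?r = "norm (x - y)"
    have "?r powr \<alpha> < e / C" using powr_less_mono2[OF \<open>\<alpha> > 0\<close> _ x[THEN conjunct2]] d_powr by simp
    then have "?r * (C * ?r powr \<alpha>) < ?r * e"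
      using x \<open>C > 0\<close> by (simp add: field_simps)
    moreover have "norm (f x) \<le> ?r * (C * ?r powr \<alpha>)" using bound[of x] by (simp add: powr_add algebra_simps)
    ultimately have "norm (f x) < ?r * e" by linarith
    then show "norm (f x - f y - 0) / ?r < e" using x \<open>f y = 0\<close> by (simp add: divide_less_eq mult.commute)
  qed
qed

definition vec_outer :: "real^'n \<Rightarrow> real^'n^'n" where
  "vec_outer d = (\<chi> i j. d $ i * d $ j)"

lemma vec_outer_mult: "vec_outer d *v h = (d \<bullet> h) *\<^sub>R d"
  by (simp add: vec_eq_iff vec_outer_def matrix_vector_mult_def inner_vec_def sum_distrib_left
      sum_distrib_right mult_ac)

lemma sym_mat_vec_outer: "sym_mat (vec_outer d)"
  by (simp add: sym_mat_def vec_outer_def transpose_def vec_eq_iff mult.commute)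

definition norm_powr_grad :: "real^'n \<Rightarrow> real \<Rightarrow> real^'n \<Rightarrow> real^'n" where
  "norm_powr_grad y \<beta> x = (\<beta> * norm (x - y) powr (\<beta> - 2)) *\<^sub>R (x - y)"

text \<open>At x = y both formulas give 0 because 0 powr _ = 0; this is the correct value for beta > 2.\<close>

definition norm_powr_hess :: "real^'n \<Rightarrow> real \<Rightarrow> real^'n \<Rightarrow> real^'n^'n" where
  "norm_powr_hess y \<beta> x = (\<beta> * norm (x - y) powr (\<beta> - 2)) *\<^sub>R mat 1
     + (\<beta> * (\<beta> - 2) * norm (x - y) powr (\<beta> - 4)) *\<^sub>R vec_outer (x - y)"

lemma norm_powr_has_derivative_grad:
  assumes "\<beta> > 2"
  shows "((\<lambda>x. norm (x - y) powr \<beta>) has_derivative (\<lambda>h. norm_powr_grad y \<beta> x \<bullet> h)) (at x)"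
proof (cases "x = y")
  case True
  have "((\<lambda>x. norm (x - y) powr \<beta>) has_derivative (\<lambda>h. 0)) (at y)"
    by (rule has_derivative_zero_of_powr_bound[of "\<beta> - 1" 1]) (use assms in auto)
  then show ?thesis using True by (simp add: norm_powr_grad_def)
next
  case False
  then show ?thesis
    using has_derivative_norm_powr[OF False, of \<beta>] by (simp add: norm_powr_grad_def mult.assoc)
qed

lemma norm_powr_grad_has_derivative:
  assumes "\<beta> > 2"
  shows "(norm_powr_grad y \<beta> has_derivative (\<lambda>h. norm_powr_hess y \<beta> x *v h)) (at x)"
proof (cases "x = y")
  case True
  have "norm (norm_powr_grad y \<beta> x) \<le> \<beta> * norm (x - y) powr (1 + (\<beta> - 2))" for x
  proof (cases "x = y")
    case False
    have "norm (x - y) powr (1 + (\<beta> - 2)) = norm (x - y) powr 1 * norm (x - y) powr (\<beta> - 2)"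
      by (rule powr_add)
    then show ?thesis using assms False by (simp add: norm_powr_grad_def)
  qed (simp add: norm_powr_grad_def)
  then have "(norm_powr_grad y \<beta> has_derivative (\<lambda>h. 0)) (at y)"
    by (intro has_derivative_zero_of_powr_bound[of "\<beta> - 2" \<beta>]) (use assms in \<open>auto simp: norm_powr_grad_def\<close>)
  then show ?thesis using True by (simp add: norm_powr_hess_def)
next
  case False
  have "(norm_powr_grad y \<beta> has_derivative
      (\<lambda>h. (\<beta> * norm (x - y) powr (\<beta> - 2)) *\<^sub>R (h - 0)
         + (\<beta> * ((\<beta> - 2) * norm (x - y) powr (\<beta> - 2 - 2) * ((x - y) \<bullet> h))) *\<^sub>R (x - y))) (at x)"
    unfolding norm_powr_grad_def[abs_def]
    by (intro has_derivative_scaleR has_derivative_mult_right has_derivative_norm_powr False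
        derivative_intros)
  then show ?thesis
    by (simp add: norm_powr_hess_def matrix_vector_mult_add_rdistrib vec_outer_mult
        scaleR_matrix_vector_assoc[symmetric] algebra_simps)
qed

section \<open>Hessians\<close>

lemma has_real_derivative_along_line:
  fixes f :: "'a::real_normed_vector \<Rightarrow> real"
  assumes "(f has_derivative L) (at (a + r *\<^sub>R v))"
  shows "((\<lambda>t. f (a + t *\<^sub>R v)) has_real_derivative L v) (at r)"
proof -
  have "((\<lambda>t. a + t *\<^sub>R v) has_derivative (\<lambda>t. t *\<^sub>R v)) (at r)"
    by (auto intro!: derivative_eq_intros)
  then have "((f \<circ> (\<lambda>t. a + t *\<^sub>R v)) has_derivative (L \<circ> (\<lambda>t. t *\<^sub>R v))) (at r)"
    by (rule diff_chain_at) (use assms in simp)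
  moreover have "L \<circ> (\<lambda>t. t *\<^sub>R v) = (*) (L v)"
    using has_derivative_bounded_linear[OF assms] by (auto simp: fun_eq_iff linear_simps)
  ultimately show ?thesis by (simp add: has_field_derivative_def o_def)
qed

lemma hessian_atI:
  assumes "open U" "x \<in> U" "\<And>y. y \<in> U \<Longrightarrow> (u has_derivative (\<lambda>h. g y \<bullet> h)) (at y)"
    and "(g has_derivative (\<lambda>h. H *v h)) (at x)"
  shows "hessian_at u x H"
  using assms unfolding hessian_at_def by blast

lemma hessian_at_has_derivative:
  assumes "hessian_at u x H"
  shows "(u has_derivative frechet_derivative u (at x)) (at x)"
  using assms unfolding hessian_at_def by (metis differentiableI frechet_derivative_works)

lemma hessian_at_dir_deriv:
  assumes "hessian_at u x H"
  shows "((\<lambda>p. dir_deriv u v p) has_derivative (\<lambda>k. (H *v k) \<bullet> v)) (at x)"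
proof -
  obtain g U where "open U" "x \<in> U" and du: "\<And>y. y \<in> U \<Longrightarrow> (u has_derivative (\<lambda>h. g y \<bullet> h)) (at y)"
    and dg: "(g has_derivative (\<lambda>h. H *v h)) (at x)"
    using assms unfolding hessian_at_def by blast
  have "g p \<bullet> v = dir_deriv u v p" if "p \<in> U" for p
    using frechet_derivative_at[OF du[OF that]] by (simp add: dir_deriv_def)
  then show ?thesis
    by (rule has_derivative_transform_within_open[OF has_derivative_inner_left[OF dg] \<open>open U\<close> \<open>x \<in> U\<close>])
qed

lemma C2_on_continuous_dir_deriv:
  assumes "C2_on \<Omega> u"
  shows "continuous_on \<Omega> (dir_deriv u v)"
  using assms hessian_at_dir_deriv has_derivative_continuous unfolding C2_on_def
  by (metis continuous_at_imp_continuous_on)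

lemma mixed_difference_mvt:
  fixes u :: "real^'n \<Rightarrow> real"
  assumes "s > 0" and U: "cball x (s * (norm v + norm w)) \<subseteq> U"
    and hess: "\<And>y. y \<in> U \<Longrightarrow> hessian_at u y (H y)"
  obtains p where "p \<in> cball x (s * (norm v + norm w))"
    and "u (x + s *\<^sub>R w + s *\<^sub>R v) - u (x + s *\<^sub>R v) - u (x + s *\<^sub>R w) + u x = s * (s * ((H p *v w) \<bullet> v))"
proof -
  have near: "x + r *\<^sub>R v + q *\<^sub>R w \<in> cball x (s * (norm v + norm w))"
    if "0 \<le> r" "r \<le> s" "0 \<le> q" "q \<le> s" for r q
  proof -
    have "norm (r *\<^sub>R v + q *\<^sub>R w) \<le> r * norm v + q * norm w"
      using that by (metis abs_of_nonneg norm_scaleR norm_triangle_ineq)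
    also have "\<dots> \<le> s * (norm v + norm w)"
      using that by (simp add: distrib_left add_mono mult_right_mono)
    finally show ?thesis by (simp add: dist_norm norm_minus_commute algebra_simps)
  qed
  have du: "(u has_derivative frechet_derivative u (at y)) (at y)" if "y \<in> U" for y
    using hessian_at_has_derivative[OF hess[OF that]] .
  define a1 where "a1 = x + s *\<^sub>R w"
  obtain r where r: "0 < r" "r < s"
    and mvt1: "(u (a1 + s *\<^sub>R v) - u (x + s *\<^sub>R v)) - (u (a1 + 0 *\<^sub>R v) - u (x + 0 *\<^sub>R v))
      = (s - 0) * (dir_deriv u v (a1 + r *\<^sub>R v) - dir_deriv u v (x + r *\<^sub>R v))"
  proof (atomize_elim, rule MVT2[OF \<open>s > 0\<close>])
    fix t assume "0 \<le> t" "t \<le> s"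
    then have "a1 + t *\<^sub>R v \<in> U" "x + t *\<^sub>R v \<in> U"
      using near[of t s] near[of t 0] U \<open>s > 0\<close> by (auto simp: a1_def algebra_simps)
    then show "((\<lambda>t. u (a1 + t *\<^sub>R v) - u (x + t *\<^sub>R v)) has_real_derivative
        dir_deriv u v (a1 + t *\<^sub>R v) - dir_deriv u v (x + t *\<^sub>R v)) (at t)"
      unfolding dir_deriv_def by (intro DERIV_diff has_real_derivative_along_line du)
  qed
  define a2 where "a2 = x + r *\<^sub>R v"
  obtain q where q: "0 < q" "q < s"
    and mvt2: "dir_deriv u v (a2 + s *\<^sub>R w) - dir_deriv u v (a2 + 0 *\<^sub>R w) = (s - 0) * ((H (a2 + q *\<^sub>R w) *v w) \<bullet> v)"
  proof (atomize_elim, rule MVT2[OF \<open>s > 0\<close>])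
    fix t assume "0 \<le> t" "t \<le> s"
    then have "a2 + t *\<^sub>R w \<in> U" using near[of r t] U r by (auto simp: a2_def)
    then show "((\<lambda>t. dir_deriv u v (a2 + t *\<^sub>R w)) has_real_derivative (H (a2 + t *\<^sub>R w) *v w) \<bullet> v) (at t)"
      by (intro has_real_derivative_along_line[of "dir_deriv u v"] hessian_at_dir_deriv hess)
  qed
  show ?thesis
  proof
    show "a2 + q *\<^sub>R w \<in> cball x (s * (norm v + norm w))" using near[of r q] r q by (simp add: a2_def)
    have "a1 + r *\<^sub>R v = a2 + s *\<^sub>R w" by (simp add: a1_def a2_def algebra_simps)
    then show "u (x + s *\<^sub>R w + s *\<^sub>R v) - u (x + s *\<^sub>R v) - u (x + s *\<^sub>R w) + u x
        = s * (s * ((H (a2 + q *\<^sub>R w) *v w) \<bullet> v))"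
      using mvt1 mvt2 by (simp add: a1_def a2_def algebra_simps)
  qed
qed

lemma eq_if_continuous_and_equal_nearby:
  fixes f g :: "'a::metric_space \<Rightarrow> real"
  assumes "continuous (at x within U) f" "continuous (at x within U) g"
    and nearby: "\<And>r. r > 0 \<Longrightarrow> \<exists>p\<in>U \<inter> ball x r. \<exists>q\<in>U \<inter> ball x r. f p = g q"
  shows "f x = g x"
proof (rule ccontr)
  assume "f x \<noteq> g x"
  define e where "e = \<bar>f x - g x\<bar> / 2"
  have "e > 0" using \<open>f x \<noteq> g x\<close> by (simp add: e_def)
  obtain d1 where "d1 > 0" and d1: "\<And>p. p \<in> U \<Longrightarrow> dist p x < d1 \<Longrightarrow> dist (f p) (f x) < e"
    using assms(1) \<open>e > 0\<close> unfolding continuous_within_eps_delta by blast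
  obtain d2 where "d2 > 0" and d2: "\<And>p. p \<in> U \<Longrightarrow> dist p x < d2 \<Longrightarrow> dist (g p) (g x) < e"
    using assms(2) \<open>e > 0\<close> unfolding continuous_within_eps_delta by blast
  obtain p q where "p \<in> U" "q \<in> U" "dist x p < min d1 d2" "dist x q < min d1 d2" and "f p = g q"
    using nearby[of "min d1 d2"] \<open>d1 > 0\<close> \<open>d2 > 0\<close> by auto
  have "dist (f p) (f x) < e" using d1[OF \<open>p \<in> U\<close>] \<open>dist x p < _\<close> by (simp add: dist_commute)
  moreover have "dist (g q) (g x) < e" using d2[OF \<open>q \<in> U\<close>] \<open>dist x q < _\<close> by (simp add: dist_commute)
  ultimately show False using \<open>f p = g q\<close> unfolding e_def dist_real_def
    by (simp add: abs_less_iff abs_if split: if_splits)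
qed

lemma sym_matI:
  fixes M :: "real^'n^'n"
  assumes "\<And>v w. (M *v w) \<bullet> v = (M *v v) \<bullet> w"
  shows "sym_mat M"
proof -
  have "M $ i $ j = M $ j $ i" for i j
    using assms[of "axis i 1" "axis j 1"] by (simp add: matrix_vector_mult_basis inner_axis column_def)
  then show ?thesis unfolding sym_mat_def by (simp add: vec_eq_iff transpose_def)
qed

lemma continuous_on_matrix_inner:
  fixes H :: "'a::topological_space \<Rightarrow> real^'n^'n"
  assumes "continuous_on U H"
  shows "continuous_on U (\<lambda>p. (H p *v w) \<bullet> v)"
proof -
  have "linear (\<lambda>M::real^'n^'n. (M *v w) \<bullet> v)"
    by (rule linearI) (simp_all add: matrix_vector_mult_add_rdistrib inner_add_left
        scaleR_matrix_vector_assoc[symmetric])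
  then have "continuous_on UNIV (\<lambda>M::real^'n^'n. (M *v w) \<bullet> v)"
    by (simp add: linear_continuous_on linear_conv_bounded_linear)
  from continuous_on_compose[OF assms continuous_on_subset[OF this]] show ?thesis
    by (simp add: o_def)
qed

lemma hessian_at_symmetric:
  fixes u :: "real^'n \<Rightarrow> real"
  assumes "open U" "x \<in> U" and hess: "\<And>y. y \<in> U \<Longrightarrow> hessian_at u y (H y)"
    and "continuous_on U H"
  shows "sym_mat (H x)"
proof (rule sym_matI)
  fix v w :: "real^'n"
  have "continuous (at x within U) (\<lambda>p. (H p *v w) \<bullet> v)" "continuous (at x within U) (\<lambda>p. (H p *v v) \<bullet> w)"
    using continuous_on_matrix_inner[OF \<open>continuous_on U H\<close>] \<open>x \<in> U\<close>
    by (simp_all add: continuous_on_eq_continuous_within)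
  then show "(H x *v w) \<bullet> v = (H x *v v) \<bullet> w"
  proof (rule eq_if_continuous_and_equal_nearby)
    fix r :: real assume "r > 0"
    obtain \<rho> where "\<rho> > 0" "cball x \<rho> \<subseteq> U" using assms(1,2) open_contains_cball by blast
    have "norm v + norm w + 1 > 0" by (smt (verit) norm_ge_zero)
    define s where "s = min \<rho> (r / 2) / (norm v + norm w + 1)"
    have "s > 0" using \<open>\<rho> > 0\<close> \<open>r > 0\<close> \<open>norm v + norm w + 1 > 0\<close> by (simp add: s_def)
    have "s * (norm v + norm w) \<le> s * (norm v + norm w + 1)" using \<open>s > 0\<close> by simp
    also have "\<dots> = min \<rho> (r / 2)" using \<open>norm v + norm w + 1 > 0\<close> by (simp add: s_def)
    finally have small: "cball x (s * (norm v + norm w)) \<subseteq> U \<inter> ball x r"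
      using \<open>cball x \<rho> \<subseteq> U\<close> \<open>r > 0\<close> by (auto simp: subset_iff)
    obtain p where "p \<in> cball x (s * (norm v + norm w))"
      and p: "u (x + s *\<^sub>R w + s *\<^sub>R v) - u (x + s *\<^sub>R v) - u (x + s *\<^sub>R w) + u x = s * (s * ((H p *v w) \<bullet> v))"
      using mixed_difference_mvt[OF \<open>s > 0\<close> _ hess, of x v w] small by blast
    obtain q where "q \<in> cball x (s * (norm w + norm v))"
      and q: "u (x + s *\<^sub>R v + s *\<^sub>R w) - u (x + s *\<^sub>R w) - u (x + s *\<^sub>R v) + u x = s * (s * ((H q *v v) \<bullet> w))"
      using mixed_difference_mvt[OF \<open>s > 0\<close> _ hess, of x w v] small by (auto simp: add.commute)
    have "x + s *\<^sub>R v + s *\<^sub>R w = x + s *\<^sub>R w + s *\<^sub>R v" by (simp add: algebra_simps)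
    with p q[unfolded this] have "s * (s * ((H p *v w) \<bullet> v)) = s * (s * ((H q *v v) \<bullet> w))" by linarith
    then have "(H p *v w) \<bullet> v = (H q *v v) \<bullet> w" using \<open>s > 0\<close> by simp
    moreover have "p \<in> U \<inter> ball x r" "q \<in> U \<inter> ball x r"
      using \<open>p \<in> _\<close> \<open>q \<in> _\<close> small by (auto simp: add.commute)
    ultimately show "\<exists>p\<in>U \<inter> ball x r. \<exists>q\<in>U \<inter> ball x r. (H p *v w) \<bullet> v = (H q *v v) \<bullet> w" by blast
  qed
qed

lemma C2_on_symmetric_hessian:
  assumes "open \<Omega>" "C2_on \<Omega> u" "x \<in> \<Omega>"
  obtains H where "hessian_at u x H" "sym_mat H"
  using assms hessian_at_symmetric unfolding C2_on_def by metis

lemma local_min_second_derivative_nonneg: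
  fixes \<psi> \<psi>' :: "real \<Rightarrow> real"
  assumes "d > 0" and min: "\<And>t. \<bar>t\<bar> < d \<Longrightarrow> \<psi> 0 \<le> \<psi> t"
    and deriv: "\<And>t. \<bar>t\<bar> < d \<Longrightarrow> (\<psi> has_real_derivative \<psi>' t) (at t)"
    and deriv2: "(\<psi>' has_real_derivative q) (at 0)"
  shows "0 \<le> q"
proof (rule ccontr)
  assume "\<not> 0 \<le> q"
  have "\<psi>' 0 = 0"
    by (rule DERIV_local_min[OF deriv \<open>d > 0\<close>]) (use \<open>d > 0\<close> min in auto)
  obtain d' where "d' > 0" and decr: "\<And>h. 0 < h \<Longrightarrow> h < d' \<Longrightarrow> \<psi>' (0 + h) < \<psi>' 0"
    using DERIV_neg_dec_right[OF deriv2] \<open>\<not> 0 \<le> q\<close> by force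
  define t where "t = min d d' / 2"
  have t: "0 < t" "t < d" "t < d'" using \<open>d > 0\<close> \<open>d' > 0\<close> by (auto simp: t_def)
  obtain \<xi> where "0 < \<xi>" "\<xi> < t" and mvt: "\<psi> t - \<psi> 0 = (t - 0) * \<psi>' \<xi>"
    using MVT2[OF t(1), of \<psi> \<psi>'] deriv t by force
  have "\<psi>' \<xi> < 0" using decr[of \<xi>] \<open>0 < \<xi>\<close> \<open>\<xi> < t\<close> t \<open>\<psi>' 0 = 0\<close> by simp
  then have "\<psi> t < \<psi> 0" using mvt mult_pos_neg[of t "\<psi>' \<xi>"] t by simp
  with min[of t] t show False by simp
qed

lemma hessian_at_local_min_psd:
  assumes "hessian_at W z H" "open V" "z \<in> V" and min: "\<And>p. p \<in> V \<Longrightarrow> W z \<le> W p"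
  shows "psd H"
  unfolding psd_def
proof
  fix v
  obtain g U where "open U" "z \<in> U" and dW: "\<And>y. y \<in> U \<Longrightarrow> (W has_derivative (\<lambda>h. g y \<bullet> h)) (at y)"
    and dg: "(g has_derivative (\<lambda>h. H *v h)) (at z)"
    using assms(1) unfolding hessian_at_def by blast
  have "open ((\<lambda>t. z + t *\<^sub>R v) -` (V \<inter> U))"
    using \<open>open V\<close> \<open>open U\<close> by (intro continuous_open_vimage open_Int) (auto intro!: continuous_intros)
  moreover have "0 \<in> (\<lambda>t. z + t *\<^sub>R v) -` (V \<inter> U)" using \<open>z \<in> V\<close> \<open>z \<in> U\<close> by simp
  ultimately obtain d where "d > 0" and "ball 0 d \<subseteq> (\<lambda>t. z + t *\<^sub>R v) -` (V \<inter> U)"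
    using open_contains_ball_eq by blast
  then have line: "z + t *\<^sub>R v \<in> V \<inter> U" if "\<bar>t\<bar> < d" for t
    using that by (auto simp: subset_iff dist_real_def)
  have "0 \<le> (H *v v) \<bullet> v"
  proof (rule local_min_second_derivative_nonneg[OF \<open>d > 0\<close>])
    show "W (z + 0 *\<^sub>R v) \<le> W (z + t *\<^sub>R v)" if "\<bar>t\<bar> < d" for t
      using min line[OF that] by simp
    show "((\<lambda>t. W (z + t *\<^sub>R v)) has_real_derivative g (z + t *\<^sub>R v) \<bullet> v) (at t)" if "\<bar>t\<bar> < d" for t
      using has_real_derivative_along_line[OF dW] line[OF that] by blast
    have "((\<lambda>p. g p \<bullet> v) has_derivative (\<lambda>k. (H *v k) \<bullet> v)) (at (z + 0 *\<^sub>R v))"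
      using has_derivative_inner_left[OF dg] by simp
    from has_real_derivative_along_line[OF this]
    show "((\<lambda>t. g (z + t *\<^sub>R v) \<bullet> v) has_real_derivative (H *v v) \<bullet> v) (at 0)" .
  qed
  then show "0 \<le> v \<bullet> (H *v v)" by (simp add: inner_commute)
qed

lemma hessian_at_diff:
  assumes "hessian_at f x A" "hessian_at g x B"
  shows "hessian_at (\<lambda>x. f x - g x) x (A - B)"
proof -
  obtain f' U where "open U" "x \<in> U" and df: "\<And>y. y \<in> U \<Longrightarrow> (f has_derivative (\<lambda>h. f' y \<bullet> h)) (at y)"
    and df': "(f' has_derivative (\<lambda>h. A *v h)) (at x)"
    using assms(1) unfolding hessian_at_def by blast
  obtain g' V where "open V" "x \<in> V" and dg: "\<And>y. y \<in> V \<Longrightarrow> (g has_derivative (\<lambda>h. g' y \<bullet> h)) (at y)"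
    and dg': "(g' has_derivative (\<lambda>h. B *v h)) (at x)"
    using assms(2) unfolding hessian_at_def by blast
  show ?thesis
  proof (rule hessian_atI[of "U \<inter> V"])
    show "((\<lambda>x. f x - g x) has_derivative (\<lambda>h. (f' y - g' y) \<bullet> h)) (at y)" if "y \<in> U \<inter> V" for y
      using has_derivative_diff[OF df dg] that by (simp add: inner_diff_left)
    show "((\<lambda>y. f' y - g' y) has_derivative (\<lambda>h. (A - B) *v h)) (at x)"
      using has_derivative_diff[OF df' dg'] by (simp add: matrix_vector_mult_diff_rdistrib)
  qed (use \<open>open U\<close> \<open>open V\<close> \<open>x \<in> U\<close> \<open>x \<in> V\<close> in auto)
qed

lemma hessian_at_cmult:
  assumes "hessian_at f x A"
  shows "hessian_at (\<lambda>x. c * f x) x (c *\<^sub>R A)"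
proof -
  obtain f' U where "open U" "x \<in> U" and df: "\<And>y. y \<in> U \<Longrightarrow> (f has_derivative (\<lambda>h. f' y \<bullet> h)) (at y)"
    and df': "(f' has_derivative (\<lambda>h. A *v h)) (at x)"
    using assms unfolding hessian_at_def by blast
  show ?thesis
  proof (rule hessian_atI[OF \<open>open U\<close> \<open>x \<in> U\<close>])
    show "((\<lambda>x. c * f x) has_derivative (\<lambda>h. (c *\<^sub>R f' y) \<bullet> h)) (at y)" if "y \<in> U" for y
      using has_derivative_mult_right[OF df[OF that], of c] by simp
    show "((\<lambda>y. c *\<^sub>R f' y) has_derivative (\<lambda>h. (c *\<^sub>R A) *v h)) (at x)"
      using has_derivative_scaleR_right[OF df', of c] by (simp add: scaleR_matrix_vector_assoc)
  qed
qed

lemma has_derivative_translate: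
  assumes "(f has_derivative L) (at (x + d))"
  shows "((\<lambda>x. f (x + d)) has_derivative L) (at x)"
proof -
  have "((\<lambda>x. x + d) has_derivative (\<lambda>h. h)) (at x)" by (auto intro!: derivative_eq_intros)
  then have "((f \<circ> (\<lambda>x. x + d)) has_derivative (L \<circ> (\<lambda>h. h))) (at x)"
    by (rule diff_chain_at) (use assms in simp)
  then show ?thesis by (simp add: o_def)
qed

lemma hessian_at_translate:
  assumes "hessian_at f (x + d) A"
  shows "hessian_at (\<lambda>x. f (x + d)) x A"
proof -
  obtain f' U where "open U" "x + d \<in> U" and df: "\<And>y. y \<in> U \<Longrightarrow> (f has_derivative (\<lambda>h. f' y \<bullet> h)) (at y)"
    and df': "(f' has_derivative (\<lambda>h. A *v h)) (at (x + d))"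
    using assms unfolding hessian_at_def by blast
  show ?thesis
  proof (rule hessian_atI[of "(\<lambda>x. x + d) -` U"])
    show "open ((\<lambda>x. x + d) -` U)"
      using \<open>open U\<close> by (intro continuous_open_vimage) (auto intro!: continuous_intros)
    show "((\<lambda>x. f (x + d)) has_derivative (\<lambda>h. f' (y + d) \<bullet> h)) (at y)" if "y \<in> (\<lambda>x. x + d) -` U" for y
      using that by (intro has_derivative_translate df) simp
  qed (use \<open>x + d \<in> U\<close> has_derivative_translate[OF df'] in auto)
qed

lemma hessian_at_norm_powr:
  assumes "\<beta> > 2"
  shows "hessian_at (\<lambda>x. norm (x - y) powr \<beta>) x (norm_powr_hess y \<beta> x)"
  by (rule hessian_atI[OF open_UNIV UNIV_I norm_powr_has_derivative_grad[OF assms]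
        norm_powr_grad_has_derivative[OF assms]])

lemma sym_mat_norm_powr_hess: "sym_mat (norm_powr_hess y \<beta> x)"
  unfolding norm_powr_hess_def by (intro sym_mat_add sym_mat_scaleR sym_mat_vec_outer) (simp add: sym_mat_def)

section \<open>The comparison argument\<close>

lemma powr_le_tangent:
  fixes p s t :: real
  assumes "0 \<le> p" "p \<le> 1" "0 < t" "0 \<le> s"
  shows "s powr p \<le> t powr p + p * t powr (p - 1) * (s - t)"
proof (cases "s = 0")
  case True
  have "t powr p = t powr (p - 1) * t" using \<open>0 < t\<close> by (simp add: powr_diff)
  then show ?thesis using True assms by (simp add: algebra_simps mult_left_le_one_le)
next
  case False
  have "concave_on {0<..} (\<lambda>x. x powr p)"
  proof (rule f''_le0_imp_concave)
    show "((\<lambda>x. x powr p) has_real_derivative p * x powr (p - 1)) (at x)" if "x \<in> {0<..}" for x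
      using that by (auto intro!: derivative_eq_intros)
    show "((\<lambda>x. p * x powr (p - 1)) has_real_derivative p * ((p - 1) * x powr (p - 2))) (at x)"
      if "x \<in> {0<..}" for x
      using that by (auto intro!: derivative_eq_intros simp: diff_diff_add)
    show "p * ((p - 1) * x powr (p - 2)) \<le> 0" for x
      using assms by (simp add: mult_nonneg_nonpos mult_nonpos_nonneg)
  qed simp
  then have "- (s powr p) - - (t powr p) \<ge> - (p * t powr (p - 1)) * (s - t)"
    using False assms
    by (intro convex_on_imp_above_tangent[where A = "{0<..}"])
       (auto simp: concave_on_def interior_open intro!: derivative_eq_intros)
  then show ?thesis by (simp add: algebra_simps)
qed

lemma difference_quotient_uniform_approx:
  fixes u :: "real^'n \<Rightarrow> real"
  assumes "compact K" and diff: "\<And>x. x \<in> K \<Longrightarrow> u differentiable (at x)"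
    and cont: "continuous_on K (dir_deriv u e)" and "\<delta> > 0" "r > 0"
    and segment: "\<And>x t. x \<in> C \<Longrightarrow> 0 \<le> t \<Longrightarrow> t \<le> r \<Longrightarrow> x + t *\<^sub>R e \<in> K"
  obtains h where "0 < h" "h \<le> r" "\<And>x. x \<in> C \<Longrightarrow> \<bar>(u (x + h *\<^sub>R e) - u x) / h - dir_deriv u e x\<bar> < \<delta>"
proof -
  obtain \<rho> where "\<rho> > 0" and \<rho>: "\<And>x x'. x \<in> K \<Longrightarrow> x' \<in> K \<Longrightarrow> dist x' x < \<rho> \<Longrightarrow>
      dist (dir_deriv u e x') (dir_deriv u e x) < \<delta>"
    using compact_uniformly_continuous[OF cont \<open>compact K\<close>] \<open>\<delta> > 0\<close>
    unfolding uniformly_continuous_on_def by metis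
  have "norm e + 1 > 0" by (smt (verit) norm_ge_zero)
  define h where "h = min r (\<rho> / (norm e + 1))"
  have "0 < h" "h \<le> r" using \<open>r > 0\<close> \<open>\<rho> > 0\<close> \<open>norm e + 1 > 0\<close> by (auto simp: h_def)
  have "h \<le> \<rho> / (norm e + 1)" by (simp add: h_def)
  then have "h * (norm e + 1) \<le> \<rho>" using \<open>norm e + 1 > 0\<close> by (simp add: le_divide_eq)
  show ?thesis
  proof (rule that[OF \<open>0 < h\<close> \<open>h \<le> r\<close>])
    fix x assume "x \<in> C"
    obtain \<xi> where "0 < \<xi>" "\<xi> < h"
      and mvt: "u (x + h *\<^sub>R e) - u (x + 0 *\<^sub>R e) = (h - 0) * dir_deriv u e (x + \<xi> *\<^sub>R e)"
    proof (atomize_elim, rule MVT2[OF \<open>0 < h\<close>])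
      fix t assume "0 \<le> t" "t \<le> h"
      then have "x + t *\<^sub>R e \<in> K" using segment[OF \<open>x \<in> C\<close>] \<open>h \<le> r\<close> by simp
      then show "((\<lambda>t. u (x + t *\<^sub>R e)) has_real_derivative dir_deriv u e (x + t *\<^sub>R e)) (at t)"
        unfolding dir_deriv_def
        by (intro has_real_derivative_along_line) (simp add: diff frechet_derivative_works[symmetric])
    qed
    have "dist (x + \<xi> *\<^sub>R e) x = \<xi> * norm e" using \<open>0 < \<xi>\<close> by (simp add: dist_norm)
    also have "\<dots> \<le> h * norm e" using \<open>\<xi> < h\<close> by (simp add: mult_right_mono)
    also have "\<dots> < \<rho>" using \<open>0 < h\<close> \<open>h * (norm e + 1) \<le> \<rho>\<close> by (simp add: distrib_left)
    moreover have "x \<in> K" "x + \<xi> *\<^sub>R e \<in> K"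
      using segment[OF \<open>x \<in> C\<close>, of 0] segment[OF \<open>x \<in> C\<close>, of \<xi>] \<open>0 < \<xi>\<close> \<open>\<xi> < h\<close> \<open>h \<le> r\<close> \<open>0 < h\<close>
      by auto
    ultimately have "\<bar>dir_deriv u e (x + \<xi> *\<^sub>R e) - dir_deriv u e x\<bar> < \<delta>"
      using \<rho> by (simp add: dist_real_def)
    then show "\<bar>(u (x + h *\<^sub>R e) - u x) / h - dir_deriv u e x\<bar> < \<delta>"
      using mvt \<open>0 < h\<close> by simp
  qed
qed

definition quot_barrier ::
    "(real^'n \<Rightarrow> real) \<Rightarrow> real^'n \<Rightarrow> real \<Rightarrow> real \<Rightarrow> real \<Rightarrow> real^'n \<Rightarrow> real \<Rightarrow> real^'n \<Rightarrow> real" where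
  "quot_barrier u e h c a y \<beta> x = (u (x + h *\<^sub>R e) - u x) / h - c * (a * u x - norm (x - y) powr \<beta>)"

lemma hessian_at_quot_barrier:
  assumes "hessian_at u z A" "hessian_at u (z + h *\<^sub>R e) A'" "\<beta> > 2"
  shows "hessian_at (quot_barrier u e h c a y \<beta>) z
    ((1 / h) *\<^sub>R (A' - A) - c *\<^sub>R (a *\<^sub>R A - norm_powr_hess y \<beta> z))"
proof -
  have "quot_barrier u e h c a y \<beta>
      = (\<lambda>x. (1 / h) * (u (x + h *\<^sub>R e) - u x) - c * (a * u x - norm (x - y) powr \<beta>))"
    by (simp add: fun_eq_iff quot_barrier_def)
  then show ?thesis
    by (simp only:) (intro hessian_at_diff hessian_at_cmult hessian_at_translate hessian_at_norm_powr assms)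
qed

lemma subdiff_hessian_diff_le:
  fixes F :: "real^'n^'n \<Rightarrow> real" and u :: "real^'n \<Rightarrow> real"
  assumes "solF F \<gamma> \<Omega> u" "1 < \<gamma>" "\<gamma> < 2" "subdiff F A S"
    and "z \<in> \<Omega>" "z' \<in> \<Omega>" "0 < u z" "hessian_at u z A" "hessian_at u z' A'" "sym_mat A" "sym_mat A'"
  shows "S (A' - A) \<le> (\<gamma> - 1) * u z powr (\<gamma> - 2) * (u z' - u z)"
proof -
  have "S (A' - A) \<le> F A' - F A"
    using \<open>subdiff F A S\<close> sym_mat_diff[OF \<open>sym_mat A'\<close> \<open>sym_mat A\<close>] unfolding subdiff_def by fastforce
  also have "\<dots> = u z' powr (\<gamma> - 1) - u z powr (\<gamma> - 1)"
    using assms(1,5,6,8,9) unfolding solF_def by simp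
  also have "\<dots> \<le> (\<gamma> - 1) * u z powr (\<gamma> - 2) * (u z' - u z)"
    using powr_le_tangent[of "\<gamma> - 1" "u z" "u z'"] assms(1-3,6,7) unfolding solF_def
    by (simp add: algebra_simps)
  finally show ?thesis .
qed

lemma quot_barrier_local_min_hessian:
  fixes u :: "real^'n \<Rightarrow> real"
  assumes "open \<Omega>" "C2_on \<Omega> u" "z \<in> \<Omega>" "z + h *\<^sub>R e \<in> \<Omega>" "\<beta> > 2"
    and "open V" "z \<in> V" and min: "\<And>p. p \<in> V \<Longrightarrow> quot_barrier u e h c a y \<beta> z \<le> quot_barrier u e h c a y \<beta> p"
  obtains A A' where "hessian_at u z A" "hessian_at u (z + h *\<^sub>R e) A'" "sym_mat A" "sym_mat A'"
    and "psd ((1 / h) *\<^sub>R (A' - A) - c *\<^sub>R (a *\<^sub>R A - norm_powr_hess y \<beta> z))"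
    and "sym_mat ((1 / h) *\<^sub>R (A' - A) - c *\<^sub>R (a *\<^sub>R A - norm_powr_hess y \<beta> z))"
proof -
  obtain A where "hessian_at u z A" "sym_mat A"
    using C2_on_symmetric_hessian[OF \<open>open \<Omega>\<close> \<open>C2_on \<Omega> u\<close> \<open>z \<in> \<Omega>\<close>] .
  obtain A' where "hessian_at u (z + h *\<^sub>R e) A'" "sym_mat A'"
    using C2_on_symmetric_hessian[OF \<open>open \<Omega>\<close> \<open>C2_on \<Omega> u\<close> \<open>z + h *\<^sub>R e \<in> \<Omega>\<close>] .
  moreover have "psd ((1 / h) *\<^sub>R (A' - A) - c *\<^sub>R (a *\<^sub>R A - norm_powr_hess y \<beta> z))"
    using hessian_at_quot_barrier[OF \<open>hessian_at u z A\<close> \<open>hessian_at u (z + h *\<^sub>R e) A'\<close> \<open>\<beta> > 2\<close>]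
      \<open>open V\<close> \<open>z \<in> V\<close> min
    by (rule hessian_at_local_min_psd)
  moreover have "sym_mat ((1 / h) *\<^sub>R (A' - A) - c *\<^sub>R (a *\<^sub>R A - norm_powr_hess y \<beta> z))"
    using \<open>sym_mat A\<close> \<open>sym_mat A'\<close> sym_mat_norm_powr_hess by (intro sym_mat_diff sym_mat_scaleR)
  ultimately show ?thesis using that \<open>hessian_at u z A\<close> \<open>sym_mat A\<close> by blast
qed

lemma quot_barrier_local_min_nonneg:
  fixes F :: "real^'n^'n \<Rightarrow> real" and u :: "real^'n \<Rightarrow> real" and \<gamma> :: real
  defines "\<beta> \<equiv> 2 / (2 - \<gamma>)"
  assumes "standing \<Lambda> \<gamma> F" "solF F \<gamma> \<Omega> u" "open \<Omega>"
    and lin: "lin_nonneg F \<gamma> \<Omega> u (\<lambda>x. a * u x - norm (x - y) powr \<beta>)"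
    and "z \<in> \<Omega>" "z + h *\<^sub>R e \<in> \<Omega>" "0 < u z" "0 < h" "0 \<le> c"
    and "open V" "z \<in> V" and min: "\<And>p. p \<in> V \<Longrightarrow> quot_barrier u e h c a y \<beta> z \<le> quot_barrier u e h c a y \<beta> p"
  shows "0 \<le> quot_barrier u e h c a y \<beta> z"
proof -
  have "1 < \<gamma>" "\<gamma> < 2" "1 \<le> \<Lambda>" "unif_elliptic \<Lambda> F" "convex_on {M. sym_mat M} F"
    using \<open>standing \<Lambda> \<gamma> F\<close> unfolding standing_def by auto
  then have "\<beta> > 2" by (simp add: \<beta>_def field_simps)
  have "C2_on \<Omega> u" using \<open>solF F \<gamma> \<Omega> u\<close> unfolding solF_def by auto
  define Hz where "Hz = norm_powr_hess y \<beta> z"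
  obtain A A' where "hessian_at u z A" "hessian_at u (z + h *\<^sub>R e) A'" "sym_mat A" "sym_mat A'"
    and "psd ((1 / h) *\<^sub>R (A' - A) - c *\<^sub>R (a *\<^sub>R A - Hz))" "sym_mat ((1 / h) *\<^sub>R (A' - A) - c *\<^sub>R (a *\<^sub>R A - Hz))"
    using quot_barrier_local_min_hessian[OF \<open>open \<Omega>\<close> \<open>C2_on \<Omega> u\<close> assms(6,7) \<open>\<beta> > 2\<close> \<open>open V\<close> \<open>z \<in> V\<close> min]
    unfolding Hz_def by blast
  define P where "P = (1 / h) *\<^sub>R (A' - A) - c *\<^sub>R (a *\<^sub>R A - Hz)"
  have "psd P" "sym_mat P" unfolding P_def by fact+
  obtain S where "subdiff F A S"
    using subdiff_exists[OF \<open>convex_on {M. sym_mat M} F\<close> \<open>sym_mat A\<close>] .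
  then have "linear S" by (simp add: subdiff_def)
  define K where "K = (\<gamma> - 1) * u z powr (\<gamma> - 2)"
  have "K > 0" using \<open>1 < \<gamma>\<close> \<open>0 < u z\<close> by (simp add: K_def)
  have first: "S (A' - A) \<le> K * (u (z + h *\<^sub>R e) - u z)"
    unfolding K_def
    by (rule subdiff_hessian_diff_le) (use assms \<open>1 < \<gamma>\<close> \<open>\<gamma> < 2\<close> \<open>subdiff F A S\<close> \<open>sym_mat A\<close> \<open>sym_mat A'\<close>
        \<open>hessian_at u z A\<close> \<open>hessian_at u (z + h *\<^sub>R e) A'\<close> in auto)
  have "hessian_at (\<lambda>x. a * u x - norm (x - y) powr \<beta>) z (a *\<^sub>R A - Hz)"
    unfolding Hz_def
    by (intro hessian_at_diff hessian_at_cmult hessian_at_norm_powr \<open>hessian_at u z A\<close> \<open>\<beta> > 2\<close>)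
  then have second: "K * (a * u z - norm (z - y) powr \<beta>) \<le> S (a *\<^sub>R A - Hz)"
    using lin \<open>z \<in> \<Omega>\<close> \<open>0 < u z\<close> \<open>hessian_at u z A\<close> \<open>subdiff F A S\<close>
    unfolding lin_nonneg_def K_def by fastforce
  have "0 \<le> S P"
    using subdiff_psd_nonneg \<open>unif_elliptic \<Lambda> F\<close> \<open>1 \<le> \<Lambda>\<close> \<open>subdiff F A S\<close> \<open>sym_mat A\<close> \<open>sym_mat P\<close> \<open>psd P\<close>
    by fastforce
  also have "S P = (1 / h) * S (A' - A) - c * S (a *\<^sub>R A - Hz)"
    unfolding P_def using \<open>linear S\<close> by (simp add: linear_diff linear_scale diff_divide_distrib)
  also have "\<dots> \<le> (1 / h) * (K * (u (z + h *\<^sub>R e) - u z)) - c * (K * (a * u z - norm (z - y) powr \<beta>))"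
    using first second \<open>0 < h\<close> \<open>0 \<le> c\<close>
    by (smt (verit) mult_left_mono divide_nonneg_pos zero_le_one)
  also have "\<dots> = K * quot_barrier u e h c a y \<beta> z"
    using \<open>0 < h\<close> by (simp add: quot_barrier_def field_simps)
  finally show ?thesis using \<open>K > 0\<close> by (simp add: zero_le_mult_iff)
qed

lemma quot_barrier_nonneg_on_boundary:
  fixes u :: "real^'n \<Rightarrow> real"
  assumes "0 \<le> u x" "0 \<le> u (x + h *\<^sub>R e)" "0 < h" "u x \<le> \<eta>" "norm (x - y) \<le> 1/2" "0 \<le> a"
    and approx: "\<bar>(u (x + h *\<^sub>R e) - u x) / h - dir_deriv u e x\<bar> < \<epsilon>"
    and large: "\<eta> \<le> u x \<Longrightarrow> 3 * \<epsilon> \<le> dir_deriv u e x"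
    and small: "- \<epsilon> \<le> dir_deriv u e x"
    and "a * \<eta> \<le> 1 / 2 powr (\<beta> + 1)"
    and boundary: "u x = 0 \<or> u x = \<eta> \<or> norm (x - y) = 1/2"
  shows "0 \<le> quot_barrier u e h (\<epsilon> * 2 powr (\<beta> + 2)) a y \<beta> x"
proof -
  define c where "c = \<epsilon> * 2 powr (\<beta> + 2)"
  define q where "q = (u (x + h *\<^sub>R e) - u x) / h"
  have "0 < \<epsilon>" using approx by linarith
  then have "0 < c" by (simp add: c_def)
  have "c * (a * u x) \<le> c * (a * \<eta>)"
    using \<open>0 < c\<close> \<open>0 \<le> a\<close> \<open>u x \<le> \<eta>\<close> by (simp add: mult_left_mono)
  also have "\<dots> \<le> c * (1 / 2 powr (\<beta> + 1))"
    by (rule mult_left_mono) (use \<open>0 < c\<close> \<open>a * \<eta> \<le> 1 / 2 powr (\<beta> + 1)\<close> in auto)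
  also have "\<dots> = 2 * \<epsilon>" by (simp add: c_def powr_add)
  finally have c_a_u: "c * (a * u x) \<le> 2 * \<epsilon>" .
  from boundary consider "u x = 0" | "u x = \<eta>" | "norm (x - y) = 1/2" by blast
  then have "c * (a * u x - norm (x - y) powr \<beta>) \<le> q"
  proof cases
    case 1
    have "0 \<le> c * norm (x - y) powr \<beta>" "0 \<le> q"
      using \<open>0 < c\<close> \<open>0 < h\<close> \<open>0 \<le> u (x + h *\<^sub>R e)\<close> 1 by (simp_all add: q_def)
    then show ?thesis using 1 by simp
  next
    case 2
    then have "2 * \<epsilon> \<le> q" using large approx by (simp add: q_def)
    then show ?thesis using c_a_u \<open>0 < c\<close> by (smt (verit) mult_left_mono powr_ge_zero right_diff_distrib)
  next
    case 3
    have "c * (1/2) powr \<beta> = 4 * \<epsilon>" by (simp add: c_def powr_add powr_divide)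
    then have "c * (a * u x - norm (x - y) powr \<beta>) = c * (a * u x) - 4 * \<epsilon>"
      by (simp only: 3 right_diff_distrib)
    moreover have "- 2 * \<epsilon> \<le> q" using small approx by (simp add: q_def)
    ultimately show ?thesis using c_a_u by linarith
  qed
  then show ?thesis by (simp add: quot_barrier_def c_def q_def)
qed

lemma continuous_on_quot_barrier:
  assumes "continuous_on T u" "S \<subseteq> T" "(\<lambda>x. x + h *\<^sub>R e) ` S \<subseteq> T" "0 < h" "0 < \<beta>"
  shows "continuous_on S (quot_barrier u e h c a y \<beta>)"
proof -
  have "continuous_on S (\<lambda>x. x + h *\<^sub>R e)" by (intro continuous_intros)
  from continuous_on_compose[OF this continuous_on_subset[OF assms(1,3)]]
  have "continuous_on S (\<lambda>x. u (x + h *\<^sub>R e))" by (simp add: o_def)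
  moreover have "continuous_on S u" using continuous_on_subset[OF assms(1,2)] .
  moreover define \<psi> where "\<psi> x = norm (x - y) powr \<beta>" for x
  have "continuous_on S \<psi>"
    unfolding \<psi>_def by (rule continuous_on_powr') (use \<open>0 < \<beta>\<close> in \<open>auto intro!: continuous_intros\<close>)
  ultimately show ?thesis
    unfolding quot_barrier_def[abs_def] \<psi>_def[symmetric] using \<open>0 < h\<close> by (intro continuous_intros) auto
qed

lemma difference_quotient_approx_near:
  fixes u :: "real^'n \<Rightarrow> real"
  assumes "C2_on (ball 0 1) u" "norm y < 1/2" "norm e = 1" "0 < \<delta>"
  obtains h where "0 < h" "\<And>x. x \<in> cball y (1/2) \<Longrightarrow> x \<in> ball 0 1 \<and> x + h *\<^sub>R e \<in> ball 0 1"
    and "\<And>x. x \<in> cball y (1/2) \<Longrightarrow> \<bar>(u (x + h *\<^sub>R e) - u x) / h - dir_deriv u e x\<bar> < \<delta>"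
proof -
  define r where "r = 1/4 - norm y / 2"
  have "0 < r" using \<open>norm y < 1/2\<close> by (simp add: r_def)
  have segment: "x + t *\<^sub>R e \<in> cball 0 (1 - r)" if "x \<in> cball y (1/2)" "0 \<le> t" "t \<le> r" for x t
  proof -
    have "norm x \<le> norm y + 1/2"
      using that(1) norm_triangle_ineq2[of x y] by (simp add: dist_norm norm_minus_commute)
    moreover have "norm (x + t *\<^sub>R e) \<le> norm x + t"
      using norm_triangle_ineq[of x "t *\<^sub>R e"] \<open>norm e = 1\<close> \<open>0 \<le> t\<close> by simp
    ultimately have "norm (x + t *\<^sub>R e) \<le> 1 - r" using \<open>t \<le> r\<close> unfolding r_def by linarith
    then show ?thesis by simp
  qed
  have "cball 0 (1 - r) \<subseteq> ball 0 1" using \<open>0 < r\<close> by auto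
  have "u differentiable (at x)" if "x \<in> cball 0 (1 - r)" for x
    using assms(1) that \<open>cball 0 (1 - r) \<subseteq> ball 0 1\<close> hessian_at_has_derivative
    unfolding C2_on_def by (meson differentiableI subsetD)
  moreover have "continuous_on (cball 0 (1 - r)) (dir_deriv u e)"
    using C2_on_continuous_dir_deriv[OF assms(1)] \<open>cball 0 (1 - r) \<subseteq> ball 0 1\<close> by (rule continuous_on_subset)
  ultimately obtain h where "0 < h" "h \<le> r"
    and "\<And>x. x \<in> cball y (1/2) \<Longrightarrow> \<bar>(u (x + h *\<^sub>R e) - u x) / h - dir_deriv u e x\<bar> < \<delta>"
    using difference_quotient_uniform_approx[OF compact_cball _ _ \<open>0 < \<delta>\<close> \<open>0 < r\<close> segment] by blast
  moreover have "x \<in> ball 0 1 \<and> x + h *\<^sub>R e \<in> ball 0 1" if "x \<in> cball y (1/2)" for x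
    using segment[OF that, of 0] segment[OF that, of h] \<open>0 < h\<close> \<open>h \<le> r\<close> \<open>0 < r\<close>
      \<open>cball 0 (1 - r) \<subseteq> ball 0 1\<close> by auto
  ultimately show ?thesis using that by blast
qed

lemma quot_barrier_negative_min:
  fixes u :: "real^'n \<Rightarrow> real"
  assumes "solF F \<gamma> (ball 0 1) u" "norm y < 1/2" "norm e = 1" "dir_deriv u e y < 0" "u y < \<eta>"
    and "0 < \<epsilon>" "0 \<le> c" "0 \<le> a" "0 < \<beta>"
  obtains h z where "0 < h" "z \<in> cball y (1/2)" "u z \<le> \<eta>" "z + h *\<^sub>R e \<in> ball 0 1"
    and "\<bar>(u (z + h *\<^sub>R e) - u z) / h - dir_deriv u e z\<bar> < \<epsilon>"
    and "quot_barrier u e h c a y \<beta> z < 0"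
    and "\<And>p. p \<in> cball y (1/2) \<Longrightarrow> u p \<le> \<eta> \<Longrightarrow> quot_barrier u e h c a y \<beta> z \<le> quot_barrier u e h c a y \<beta> p"
proof -
  have u: "continuous_on (ball 0 1) u" "C2_on (ball 0 1) u" "\<And>x. x \<in> ball 0 1 \<Longrightarrow> 0 \<le> u x"
    using assms(1) unfolding solF_def by auto
  define \<delta> where "\<delta> = min \<epsilon> (- dir_deriv u e y / 2)"
  have "0 < \<delta>" using \<open>0 < \<epsilon>\<close> \<open>dir_deriv u e y < 0\<close> by (simp add: \<delta>_def)
  obtain h where "0 < h" and in_ball: "\<And>x. x \<in> cball y (1/2) \<Longrightarrow> x \<in> ball 0 1 \<and> x + h *\<^sub>R e \<in> ball 0 1"
    and approx: "\<And>x. x \<in> cball y (1/2) \<Longrightarrow> \<bar>(u (x + h *\<^sub>R e) - u x) / h - dir_deriv u e x\<bar> < \<delta>"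
    using difference_quotient_approx_near[OF u(2) \<open>norm y < 1/2\<close> \<open>norm e = 1\<close> \<open>0 < \<delta>\<close>] by blast
  define W where "W = quot_barrier u e h c a y \<beta>"
  define K where "K = {x \<in> cball y (1/2). u x \<le> \<eta>}"
  have "continuous_on (cball y (1/2)) W"
    unfolding W_def using in_ball \<open>0 < h\<close> \<open>0 < \<beta>\<close>
    by (intro continuous_on_quot_barrier[OF u(1)]) auto
  then have "continuous_on K W" by (rule continuous_on_subset) (auto simp: K_def)
  have "continuous_on (cball y (1/2)) u"
    using in_ball by (intro continuous_on_subset[OF u(1)]) auto
  then have "closed K"
    unfolding K_def by (intro continuous_on_closed_Collect_le continuous_on_const closed_cball)
  moreover have "bounded K" by (rule bounded_subset[OF bounded_cball, of _ y "1/2"]) (auto simp: K_def)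
  ultimately have "compact K" by (simp add: compact_eq_bounded_closed)
  have "y \<in> K" using \<open>u y < \<eta>\<close> by (simp add: K_def)
  obtain z where "z \<in> K" and z_min: "\<And>p. p \<in> K \<Longrightarrow> W z \<le> W p"
    using continuous_attains_inf[OF \<open>compact K\<close> _ \<open>continuous_on K W\<close>] \<open>y \<in> K\<close> by blast
  have "W y < 0"
  proof -
    have "(u (y + h *\<^sub>R e) - u y) / h < dir_deriv u e y + \<delta>" using approx[of y] by simp
    moreover have "0 \<le> c * (a * u y)" using \<open>0 \<le> c\<close> \<open>0 \<le> a\<close> u(3) in_ball[of y] by simp
    moreover have "\<delta> \<le> - dir_deriv u e y / 2" by (simp add: \<delta>_def)
    ultimately show ?thesis using \<open>dir_deriv u e y < 0\<close> by (simp add: W_def quot_barrier_def)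
  qed
  show ?thesis
  proof (rule that[of h z])
    show "quot_barrier u e h c a y \<beta> z < 0" using z_min[OF \<open>y \<in> K\<close>] \<open>W y < 0\<close> by (simp add: W_def)
  qed (use \<open>0 < h\<close> \<open>z \<in> K\<close> in_ball approx z_min \<delta>_def in \<open>auto simp: K_def W_def\<close>)
qed

lemma dir_deriv_nonneg_at:
  fixes F :: "real^'n^'n \<Rightarrow> real" and u :: "real^'n \<Rightarrow> real" and \<gamma> :: real
  defines "\<beta> \<equiv> 2 / (2 - \<gamma>)"
  assumes "standing \<Lambda> \<gamma> F" "solF F \<gamma> (ball 0 1) u" "0 < a"
    and lin: "lin_nonneg F \<gamma> (ball 0 1) u (\<lambda>x. a * u x - norm (x - y) powr \<beta>)"
    and "norm e = 1" "a * \<eta> \<le> 1 / 2 powr (\<beta> + 1)" "0 < \<epsilon>"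
    and large: "\<And>x. x \<in> ball 0 1 \<Longrightarrow> \<eta> \<le> u x \<Longrightarrow> 3 * \<epsilon> \<le> dir_deriv u e x"
    and small: "\<And>x. x \<in> ball 0 1 \<Longrightarrow> - \<epsilon> \<le> dir_deriv u e x"
    and "norm y < 1/2"
  shows "0 \<le> dir_deriv u e y"
proof (rule ccontr)
  assume "\<not> 0 \<le> dir_deriv u e y"
  have "y \<in> ball 0 1" using \<open>norm y < 1/2\<close> by simp
  then have "u y < \<eta>" using large \<open>\<not> 0 \<le> dir_deriv u e y\<close> \<open>0 < \<epsilon>\<close> by force
  have "0 < \<beta>" using \<open>standing \<Lambda> \<gamma> F\<close> by (simp add: standing_def \<beta>_def)
  have u_nonneg: "\<And>x. x \<in> ball 0 1 \<Longrightarrow> 0 \<le> u x" and "continuous_on (ball 0 1) u"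
    using \<open>solF F \<gamma> (ball 0 1) u\<close> unfolding solF_def by auto
  define c where "c = \<epsilon> * 2 powr (\<beta> + 2)"
  have "0 \<le> c" "dir_deriv u e y < 0" using \<open>0 < \<epsilon>\<close> \<open>\<not> 0 \<le> dir_deriv u e y\<close> by (auto simp: c_def)
  define W where "W h = quot_barrier u e h c a y \<beta>" for h
  obtain h z where "0 < h" "z \<in> cball y (1/2)" "u z \<le> \<eta>" "z + h *\<^sub>R e \<in> ball 0 1"
    and approx: "\<bar>(u (z + h *\<^sub>R e) - u z) / h - dir_deriv u e z\<bar> < \<epsilon>"
    and "W h z < 0" and min: "\<And>p. p \<in> cball y (1/2) \<Longrightarrow> u p \<le> \<eta> \<Longrightarrow> W h z \<le> W h p"
    using quot_barrier_negative_min[OF \<open>solF F \<gamma> (ball 0 1) u\<close> \<open>norm y < 1/2\<close> \<open>norm e = 1\<close>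
        \<open>dir_deriv u e y < 0\<close> \<open>u y < \<eta>\<close> \<open>0 < \<epsilon>\<close> \<open>0 \<le> c\<close> less_imp_le[OF \<open>0 < a\<close>] \<open>0 < \<beta>\<close>]
    unfolding W_def by blast
  have "norm (z - y) \<le> 1/2" using \<open>z \<in> cball y (1/2)\<close> by (simp add: dist_norm norm_minus_commute)
  then have "z \<in> ball 0 1"
    using \<open>norm y < 1/2\<close> norm_triangle_ineq2[of z y] by simp
  have "0 \<le> W h z" if "u z = 0 \<or> u z = \<eta> \<or> norm (z - y) = 1/2"
    unfolding W_def c_def
    using \<open>z \<in> ball 0 1\<close> \<open>z + h *\<^sub>R e \<in> ball 0 1\<close>
    by (intro quot_barrier_nonneg_on_boundary[OF _ _ \<open>0 < h\<close> \<open>u z \<le> \<eta>\<close> \<open>norm (z - y) \<le> 1/2\<close>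
          less_imp_le[OF \<open>0 < a\<close>] approx _ _ \<open>a * \<eta> \<le> 1 / 2 powr (\<beta> + 1)\<close> that] u_nonneg large small)
  with \<open>W h z < 0\<close> have "\<not> (u z = 0 \<or> u z = \<eta> \<or> norm (z - y) = 1/2)" by force
  then have "0 < u z" "u z < \<eta>" "z \<in> ball y (1/2)"
    using u_nonneg[OF \<open>z \<in> ball 0 1\<close>] \<open>u z \<le> \<eta>\<close> \<open>norm (z - y) \<le> 1/2\<close>
    by (auto simp: dist_norm norm_minus_commute)
  define V where "V = ball y (1/2) \<inter> (ball 0 1 \<inter> u -` {..<\<eta>})"
  have "open V" unfolding V_def
    by (intro open_Int open_ball continuous_open_preimage[OF \<open>continuous_on (ball 0 1) u\<close>]) auto
  have "0 \<le> W h z"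
    unfolding W_def \<beta>_def
  proof (rule quot_barrier_local_min_nonneg[OF \<open>standing \<Lambda> \<gamma> F\<close> \<open>solF F \<gamma> (ball 0 1) u\<close> open_ball])
    show "\<And>p. p \<in> V \<Longrightarrow> quot_barrier u e h c a y (2 / (2 - \<gamma>)) z \<le> quot_barrier u e h c a y (2 / (2 - \<gamma>)) p"
      using min by (auto simp: V_def W_def \<beta>_def)
  qed (use lin \<open>z \<in> ball 0 1\<close> \<open>z + h *\<^sub>R e \<in> ball 0 1\<close> \<open>0 < u z\<close> \<open>0 < h\<close> \<open>0 < \<epsilon>\<close> \<open>open V\<close>
      \<open>u z < \<eta>\<close> \<open>z \<in> ball y (1/2)\<close> in \<open>auto simp: V_def c_def \<beta>_def\<close>)
  with \<open>W h z < 0\<close> show False by simp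
qed

theorem lemma2p11:
  fixes \<kappa> :: real
  assumes "\<kappa> > 0"
  shows "\<exists>\<epsilon>>0. \<forall>(\<Lambda>::real) (\<gamma>::real) (F::real^'n^'n \<Rightarrow> real) (a0::real) (u::real^'n \<Rightarrow> real) (e::real^'n) (\<eta>::real).
     standing \<Lambda> \<gamma> F \<longrightarrow>
     solF F \<gamma> (ball 0 1) u \<longrightarrow>
     0 < a0 \<longrightarrow>
     (\<forall>\<Omega> v x0 a. open \<Omega> \<longrightarrow> connected \<Omega> \<longrightarrow> solF F \<gamma> \<Omega> v \<longrightarrow> a0 \<le> a \<longrightarrow>
        lin_nonneg F \<gamma> \<Omega> v (\<lambda>x. a * v x - norm (x - x0) powr (2 / (2 - \<gamma>)))) \<longrightarrow>
     norm e = 1 \<longrightarrow>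
     0 < \<eta> \<longrightarrow> \<eta> \<le> 1 / (2 powr (2 / (2 - \<gamma>) + 1) * a0) \<longrightarrow>
     (\<forall>x\<in>ball 0 1. \<eta> \<le> u x \<longrightarrow> \<kappa> \<le> dir_deriv u e x) \<longrightarrow>
     (\<forall>x\<in>ball 0 1. - \<epsilon> \<le> dir_deriv u e x) \<longrightarrow>
     (\<forall>x\<in>ball 0 (1/2). 0 \<le> dir_deriv u e x)"
proof (intro exI[of _ "\<kappa> / 3"] conjI allI impI ballI)
  show "0 < \<kappa> / 3" using \<open>\<kappa> > 0\<close> by simp
next
  fix \<Lambda> \<gamma> a0 \<eta> :: real and F :: "real^'n^'n \<Rightarrow> real" and u :: "real^'n \<Rightarrow> real" and e y :: "real^'n"
  assume "standing \<Lambda> \<gamma> F" "solF F \<gamma> (ball 0 1) u" "0 < a0"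
    and lin: "\<forall>\<Omega> v x0 a. open \<Omega> \<longrightarrow> connected \<Omega> \<longrightarrow> solF F \<gamma> \<Omega> v \<longrightarrow> a0 \<le> a \<longrightarrow>
        lin_nonneg F \<gamma> \<Omega> v (\<lambda>x. a * v x - norm (x - x0) powr (2 / (2 - \<gamma>)))"
    and "norm e = 1" "0 < \<eta>" "\<eta> \<le> 1 / (2 powr (2 / (2 - \<gamma>) + 1) * a0)"
    and "\<forall>x\<in>ball 0 1. \<eta> \<le> u x \<longrightarrow> \<kappa> \<le> dir_deriv u e x"
    and "\<forall>x\<in>ball 0 1. - (\<kappa> / 3) \<le> dir_deriv u e x"
    and "y \<in> ball 0 (1/2)"
  have "lin_nonneg F \<gamma> (ball 0 1) u (\<lambda>x. a0 * u x - norm (x - y) powr (2 / (2 - \<gamma>)))"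
    using lin \<open>solF F \<gamma> (ball 0 1) u\<close> convex_connected[OF convex_ball] by blast
  moreover have "a0 * \<eta> \<le> 1 / 2 powr (2 / (2 - \<gamma>) + 1)"
    using \<open>\<eta> \<le> _\<close> \<open>0 < a0\<close> by (simp add: field_simps)
  ultimately show "0 \<le> dir_deriv u e y"
    by (intro dir_deriv_nonneg_at[where \<epsilon> = "\<kappa> / 3"])
      (use \<open>standing \<Lambda> \<gamma> F\<close> \<open>solF F \<gamma> (ball 0 1) u\<close> \<open>0 < a0\<close> \<open>norm e = 1\<close> \<open>\<kappa> > 0\<close> \<open>y \<in> ball 0 (1/2)\<close>
        \<open>\<forall>x\<in>ball 0 1. \<eta> \<le> u x \<longrightarrow> \<kappa> \<le> dir_deriv u e x\<close>
        \<open>\<forall>x\<in>ball 0 1. - (\<kappa> / 3) \<le> dir_deriv u e x\<close> in auto)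
qed

end
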